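(* For integers $n\ge k\ge1$ define integers $A_h^{k,n}$ ($h\in\mathbb{Z}$) by $A_h^{k,n}=0$ if $h>k$ or $h\le0$, $A_k^{k,n}=1$, and for $1\le h\le k-1$ recursively (downwards in $h$) \[A_h^{k,n}=-\sum_{j=h+1}^{k}(-1)^{\lfloor\frac{j-h+1}{2}\rfloor}\binom{n-j+\lfloor\frac{j-h}{2}\rfloor}{\lfloor\frac{j-h}{2}\rfloor}A_j^{k,n},\] and set $A_h^{k,n}=0$ for all $h$ when $k\le 0$. Then for $k\ge2$ and $1\le h\le k-1$: (1) $A_{h+1}^{k,n}=A_h^{k-1,n-1}$; (2) $A_h^{k,k}=A_h^{k-1,k-1}+A_h^{k-2,k-1}$; (3) if $k<n$, $A_h^{k,n}=A_h^{k,n-1}+A_h^{k-2,n-1}$.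
   Context: $\binom{a}{b}$ denotes the ordinary binomial coefficient and $\lfloor x\rfloor$ the integer part. *)

theory Defs
  imports Main
begin

text \<open>The binomial top n-j+floor((j-h)/2) is nonnegative
  whenever n \<ge> k (the paper's range); nat is only a coercion there.\<close>

function Acoef :: "int \<Rightarrow> int \<Rightarrow> int \<Rightarrow> int" where
  "Acoef k n h =
     (if k \<le> 0 \<or> h > k \<or> h \<le> 0 then 0
      else if h = k then 1
      else - (\<Sum>j\<in>{h+1..k}. (-1) ^ nat ((j - h + 1) div 2)
                 * int (nat (n - j + (j - h) div 2) choose nat ((j - h) div 2))
                 * Acoef k n j))"
  by auto
termination
  by (relation "measure (\<lambda>(k, n, h). nat (k - h))") auto

end

theory Submission
  imports Defs Complex_Main
begin

text \<open>The coefficients have the closed form \<open>A_h^{k,n} = binom(n - h, \<lfloor>(k - h)/2\<rfloor>)\<close>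
  for \<open>0 < h \<le> k \<le> n\<close>, after which the three relations are instances of Pascal's rule.
  The closed form satisfies the defining recursion because, after splitting the recursion sum by
  the parity of \<open>j - h\<close>, each half reduces to \<open>\<Sum>s\<le>r. (-1)^s binom(N-s, s) binom(N-2s, r-s) = 1\<close>;
  by \<open>choose_mult\<close> this is the \<open>r\<close>-th finite difference of the degree-\<open>r\<close> polynomial
  \<open>binom(x, r)\<close>, which is \<open>1\<close>.\<close>

declare Acoef.simps [simp del]

lemma gbinomial_alternating_difference:
  fixes x :: "'a :: field_char_0"
  shows "(\<Sum>s\<le>r. (-1)^s * of_nat (r choose s) * ((x - of_nat s) gchoose r)) = 1"
proof (induction r arbitrary: x)
  case 0
  then show ?case by simp
next
  case (Suc r)
  define g where "g y = y gchoose Suc r" for y :: 'a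
  have pascal: "g y - g (y - 1) = (y - 1) gchoose r" for y
    unfolding g_def using gbinomial_Suc_Suc[of "y - 1" r] by simp
  have "(\<Sum>s\<le>Suc r. (-1)^s * of_nat (Suc r choose s) * g (x - of_nat s))
      = (\<Sum>s\<le>Suc r. (-1)^s * of_nat (r choose s) * g (x - of_nat s))
        - (\<Sum>s\<le>r. (-1)^s * of_nat (r choose s) * g (x - 1 - of_nat s))"
    by (subst (1 2) sum.atMost_Suc_shift)
       (simp add: sum_subtractf[symmetric] sum.distrib[symmetric] algebra_simps)
  also have "\<dots> = (\<Sum>s\<le>r. (-1)^s * of_nat (r choose s) * (g (x - of_nat s) - g (x - 1 - of_nat s)))"
    by (simp add: algebra_simps sum_subtractf)
  also have "\<dots> = (\<Sum>s\<le>r. (-1)^s * of_nat (r choose s) * ((x - 1 - of_nat s) gchoose r))"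
    using pascal[of "x - of_nat _"] by (simp add: diff_diff_eq add.commute)
  also have "\<dots> = 1"
    by (rule Suc.IH)
  finally show ?case
    unfolding g_def .
qed

lemma choose_alternating_difference:
  assumes "r \<le> N"
  shows "(\<Sum>s\<le>r. (-1)^s * int (r choose s) * int (N - s choose r)) = 1"
proof -
  have "(of_int (\<Sum>s\<le>r. (-1)^s * int (r choose s) * int (N - s choose r)) :: real)
      = (\<Sum>s\<le>r. (-1)^s * of_nat (r choose s) * ((of_nat N - of_nat s) gchoose r))"
    unfolding of_int_sum
  proof (intro sum.cong refl)
    fix s assume "s \<in> {..r}"
    then have "s \<le> N" using assms by simp
    then show "of_int ((-1)^s * int (r choose s) * int (N - s choose r))
        = (-1)^s * of_nat (r choose s) * ((of_nat N - of_nat s :: real) gchoose r)"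
      by (simp add: binomial_gbinomial)
  qed
  also have "\<dots> = 1"
    by (rule gbinomial_alternating_difference)
  finally show ?thesis
    by linarith
qed

lemma alternating_choose_product_sum:
  assumes "2 * r \<le> N"
  shows "(\<Sum>s\<le>r. (-1)^s * int (N - s choose s) * int (N - 2*s choose (r - s))) = 1"
proof -
  have "(N - s choose s) * (N - 2*s choose (r - s)) = (r choose s) * (N - s choose r)"
    if "s \<le> r" for s
  proof -
    have "(N - s choose r) * (r choose s) = (N - s choose s) * (N - 2*s choose (r - s))"
      using choose_mult[of s r "N - s"] that assms by (simp add: mult_2)
    then show ?thesis
      by (simp add: mult.commute)
  qed
  then have "(\<Sum>s\<le>r. (-1)^s * int (N - s choose s) * int (N - 2*s choose (r - s)))
      = (\<Sum>s\<le>r. (-1)^s * int (r choose s) * int (N - s choose r))"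
    by (intro sum.cong refl) (simp flip: of_nat_mult add: mult.assoc)
  also have "\<dots> = 1"
    using assms by (intro choose_alternating_difference) simp
  finally show ?thesis .
qed

lemma sum_atMost_split_parity:
  "(\<Sum>e\<le>d. f e) = (\<Sum>s\<le>d div 2. f (2*s)) + (\<Sum>s<(d+1) div 2. f (2*s+1))"
  for f :: "nat \<Rightarrow> 'a :: comm_monoid_add"
proof (induction d)
  case 0
  then show ?case by simp
next
  case (Suc d)
  show ?case
  proof (cases "even d")
    case True
    then have "Suc d div 2 = d div 2" "(Suc d + 1) div 2 = Suc ((d + 1) div 2)" "2 * ((d + 1) div 2) + 1 = Suc d"
      by presburger+
    then show ?thesis using Suc.IH by (simp add: ac_simps)
  next
    case False
    then have "Suc d div 2 = Suc (d div 2)" "(Suc d + 1) div 2 = (d + 1) div 2" "2 * Suc (d div 2) = Suc d"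
      by presburger+
    then show ?thesis using Suc.IH by (simp add: ac_simps)
  qed
qed

lemma closed_form_recursion_identity:
  assumes "1 \<le> d" and "d \<le> N"
  shows "(\<Sum>e\<le>d. (-1)^((e+1) div 2) * int (N - e + e div 2 choose (e div 2))
                    * int (N - e choose ((d - e) div 2))) = 0"
proof -
  define f where "f e = (-1)^((e+1) div 2) * int (N - e + e div 2 choose (e div 2))
                    * int (N - e choose ((d - e) div 2))" for e
  have even: "(\<Sum>s\<le>d div 2. f (2*s)) = 1"
  proof -
    have "f (2*s) = (-1)^s * int (N - s choose s) * int (N - 2*s choose (d div 2 - s))"
      if "s \<le> d div 2" for s
    proof -
      have "N - 2*s + s = N - s" "(d - 2*s) div 2 = d div 2 - s"
        using that assms by auto
      then show ?thesis
        unfolding f_def by simp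
    qed
    then have "(\<Sum>s\<le>d div 2. f (2*s))
        = (\<Sum>s\<le>d div 2. (-1)^s * int (N - s choose s) * int (N - 2*s choose (d div 2 - s)))"
      by (intro sum.cong) simp_all
    also have "\<dots> = 1"
      using assms by (intro alternating_choose_product_sum) simp
    finally show ?thesis .
  qed
  have odd: "(\<Sum>s<(d+1) div 2. f (2*s+1)) = -1"
  proof -
    have "f (2*s+1) = - ((-1)^s * int (N - 1 - s choose s) * int (N - 1 - 2*s choose ((d - 1) div 2 - s)))"
      if "s \<le> (d - 1) div 2" for s
    proof -
      have "N - (2*s+1) + s = N - 1 - s" "(2*s+1+1) div 2 = Suc s" "(d - (2*s+1)) div 2 = (d - 1) div 2 - s"
        using that assms by auto
      then show ?thesis
        unfolding f_def by simp
    qed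
    moreover have "(d + 1) div 2 = Suc ((d - 1) div 2)"
      using assms by simp
    ultimately have "(\<Sum>s<(d+1) div 2. f (2*s+1))
        = - (\<Sum>s\<le>(d - 1) div 2. (-1)^s * int (N - 1 - s choose s) * int (N - 1 - 2*s choose ((d - 1) div 2 - s)))"
      by (simp add: lessThan_Suc_atMost sum_negf[symmetric])
    also have "\<dots> = -1"
      using assms by (subst alternating_choose_product_sum) simp_all
    finally show ?thesis .
  qed
  show ?thesis
    using sum_atMost_split_parity[of f d] even odd unfolding f_def by simp
qed

lemma sum_int_atLeastAtMost_as_nat:
  fixes h k :: int
  assumes "h \<le> k"
  shows "(\<Sum>j\<in>{h..k}. f j) = (\<Sum>e\<le>nat (k - h). f (h + int e))"
  by (rule sum.reindex_bij_witness[of _ "\<lambda>e. h + int e" "\<lambda>j. nat (j - h)"]) (use assms in auto)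

lemma Acoef_closed_form:
  assumes "0 < h" and "h \<le> k" and "k \<le> n"
  shows "Acoef k n h = int (nat (n - h) choose nat ((k - h) div 2))"
  using assms
proof (induction "nat (k - h)" arbitrary: h rule: less_induct)
  case less
  define c where "c j = (-1) ^ nat ((j - h + 1) div 2) * int (nat (n - j + (j - h) div 2) choose nat ((j - h) div 2))" for j
  define closed where "closed j = int (nat (n - j) choose nat ((k - j) div 2))" for j
  show ?case
  proof (cases "h = k")
    case True
    then show ?thesis using less.prems by (subst Acoef.simps) simp
  next
    case False
    then have "h < k" using less.prems by simp
    \<comment> \<open>the \<open>j = h\<close> term of this sum is \<open>closed h\<close> itself, as \<open>c h = 1\<close>\<close>
    have "(\<Sum>j\<in>{h..k}. c j * closed j) = 0"
    proof -
      define d N where "d = nat (k - h)" and "N = nat (n - h)"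
      have "c (h + int e) * closed (h + int e)
          = (-1)^((e+1) div 2) * int (N - e + e div 2 choose (e div 2)) * int (N - e choose ((d - e) div 2))"
        if "e \<le> d" for e
        using that less.prems unfolding c_def closed_def d_def N_def
        by (simp add: nat_div_distrib nat_add_distrib nat_diff_distrib)
      then have "(\<Sum>j\<in>{h..k}. c j * closed j)
          = (\<Sum>e\<le>d. (-1)^((e+1) div 2) * int (N - e + e div 2 choose (e div 2)) * int (N - e choose ((d - e) div 2)))"
        using \<open>h < k\<close> by (simp add: sum_int_atLeastAtMost_as_nat d_def)
      also have "\<dots> = 0"
        using \<open>h < k\<close> less.prems unfolding d_def N_def by (intro closed_form_recursion_identity) auto
      finally show ?thesis .
    qed
    moreover have "Acoef k n h = - (\<Sum>j\<in>{h+1..k}. c j * closed j)"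
    proof -
      have "Acoef k n j = closed j" if "j \<in> {h+1..k}" for j
        using that less unfolding closed_def by (intro less.hyps) auto
      then show ?thesis
        using \<open>h < k\<close> less.prems by (subst Acoef.simps) (simp add: c_def)
    qed
    moreover have "{h..k} = insert h {h+1..k}" and "c h = 1"
      using \<open>h < k\<close> less.prems by (auto simp: c_def)
    ultimately show ?thesis
      unfolding closed_def by simp
  qed
qed

lemma Acoef_eq_0_above: "k < h \<Longrightarrow> Acoef k n h = 0"
  by (subst Acoef.simps) simp

lemma choose_half_rec:
  assumes "2 \<le> D"
  shows "D choose (D div 2) = (D - 1 choose ((D - 1) div 2)) + (D - 1 choose ((D - 2) div 2))"
proof (cases "even D")
  case True
  then obtain q where q: "D = 2 * Suc q"
    using assms by (intro that[of "D div 2 - 1"]) auto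
  have "Suc (2*q + 1) choose Suc q = (2*q + 1 choose q) + (2*q + 1 choose Suc q)"
    by simp
  moreover have "2*q + 1 choose Suc q = 2*q + 1 choose q"
    using binomial_symmetric[of q "2*q + 1"] by simp
  ultimately show ?thesis
    using q by simp
next
  case False
  then obtain q where q: "D = 2 * Suc q + 1"
    using assms by (intro that[of "D div 2 - 1"]) presburger
  have "Suc (2 * Suc q) choose Suc q = (2 * Suc q choose q) + (2 * Suc q choose Suc q)"
    by simp
  then show ?thesis
    using q by simp
qed

lemma Acoef_shift:
  assumes "1 \<le> h" and "h < k" and "k \<le> n"
  shows "Acoef k n (h + 1) = Acoef (k - 1) (n - 1) h"
  using assms by (simp add: Acoef_closed_form algebra_simps)

lemma Acoef_diagonal_rec:
  assumes "1 \<le> h" and "h < k"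
  shows "Acoef k k h = Acoef (k - 1) (k - 1) h + Acoef (k - 2) (k - 1) h"
proof (cases "h = k - 1")
  case True
  then show ?thesis
    using assms by (simp add: Acoef_closed_form Acoef_eq_0_above)
next
  case False
  define D where "D = nat (k - h)"
  have "h \<le> k - 2" and "2 \<le> D"
    using assms False unfolding D_def by auto
  have nat_half: "nat (x div 2) = nat x div 2" for x :: int
    by (cases "x \<ge> 0") (auto simp: nat_div_distrib)
  have "Acoef k k h = int (D choose (D div 2))"
    using assms unfolding D_def by (simp add: Acoef_closed_form nat_half)
  moreover have "Acoef (k - 1) (k - 1) h = int (D - 1 choose ((D - 1) div 2))"
    using assms unfolding D_def by (simp add: Acoef_closed_form nat_half nat_diff_distrib)
  moreover have "Acoef (k - 2) (k - 1) h = int (D - 1 choose ((D - 2) div 2))"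
    using assms \<open>h \<le> k - 2\<close> unfolding D_def by (simp add: Acoef_closed_form nat_half nat_diff_distrib)
  ultimately show ?thesis
    using choose_half_rec[OF \<open>2 \<le> D\<close>] by simp
qed

lemma Acoef_pascal_rec:
  assumes "1 \<le> h" and "h < k" and "k < n"
  shows "Acoef k n h = Acoef k (n - 1) h + Acoef (k - 2) (n - 1) h"
proof (cases "h = k - 1")
  case True
  then show ?thesis
    using assms by (simp add: Acoef_closed_form Acoef_eq_0_above)
next
  case False
  define M q where "M = nat (n - 1 - h)" and "q = nat ((k - 2 - h) div 2)"
  have "nat (n - h) = Suc M" "nat ((k - h) div 2) = Suc q"
    using assms False unfolding M_def q_def by auto
  then show ?thesis
    using assms False unfolding M_def q_def by (simp add: Acoef_closed_form)
qed

theorem lemma5p7: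
  fixes k n h :: int
  assumes "k \<le> n" and "2 \<le> k" and "1 \<le> h" and "h \<le> k - 1"
  shows "Acoef k n (h + 1) = Acoef (k - 1) (n - 1) h
       \<and> Acoef k k h = Acoef (k - 1) (k - 1) h + Acoef (k - 2) (k - 1) h
       \<and> (k < n \<longrightarrow> Acoef k n h = Acoef k (n - 1) h + Acoef (k - 2) (n - 1) h)"
  using assms Acoef_shift[of h k n] Acoef_diagonal_rec[of h k] Acoef_pascal_rec[of h k n]
  by auto

end
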